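(* Let $N,\beta,\mu,\gamma>0$ with $\frac{\beta N}{\mu+\gamma}>1$ and $*:=N-\frac{\mu+\gamma}{\beta}$. For $a,b\in(0,N)$ define $$V(a,b)=\inf_{t>0}\ \inf\Big\{\tfrac12\int_0^t|u(s)|^2ds:\ u\in L^2([0,t]),\ \phi(t)=b,\ \text{where } \phi(s)=a+\int_0^s\phi(\theta)(\beta N-\mu-\gamma-\beta\phi(\theta))d\theta+\int_0^s\phi(\theta)(N-\phi(\theta))u(\theta)d\theta\Big\},$$ and set $\overline{V}_\rho=V( *,\rho)$, $\overline{V}_{-\rho}=V( *,N-\rho)$ for small $\rho>0$. Then $$\lim_{\rho\to0}\overline{V}_\rho=\lim_{\rho\to0}\overline{V}_{-\rho}=\infty.$$
   Context: $V(a,b)$ is the large-deviation quasi-potential (minimal control cost) for moving from $a$ to $b$ for the SDE $dI=I([\beta N-\mu-\gamma-\beta I]dt+\sigma(N-I)dB)$; $*$ is its positive deterministic equilibrium. *)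

theory Defs
  imports "HOL-Analysis.Analysis"
begin

definition admissible ::
  "real \<Rightarrow> real \<Rightarrow> real \<Rightarrow> real \<Rightarrow> real \<Rightarrow> real \<Rightarrow> real
     \<Rightarrow> (real \<Rightarrow> real) \<Rightarrow> (real \<Rightarrow> real) \<Rightarrow> bool" where
  "admissible N \<beta> \<mu> \<gamma> a b t u \<phi> \<longleftrightarrow>
     u \<in> borel_measurable lborel \<and>
     set_integrable lborel {0..t} (\<lambda>s. (u s)\<^sup>2) \<and>
     continuous_on {0..t} \<phi> \<and>
     (\<forall>s\<in>{0..t}. \<phi> s = a
        + (LINT \<theta>:{0..s}|lborel. \<phi> \<theta> * (\<beta> * N - \<mu> - \<gamma> - \<beta> * \<phi> \<theta>))
        + (LINT \<theta>:{0..s}|lborel. \<phi> \<theta> * (N - \<phi> \<theta>) * u \<theta>)) \<and>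
     \<phi> t = b"

text \<open>Quasi-potential V(a,b); the infimum is taken in the extended reals, so
  that it equals \<infinity> when no admissible control exists.\<close>
definition quasi_potential ::
  "real \<Rightarrow> real \<Rightarrow> real \<Rightarrow> real \<Rightarrow> real \<Rightarrow> real \<Rightarrow> ereal" where
  "quasi_potential N \<beta> \<mu> \<gamma> a b =
     (INF t\<in>{0<..}. Inf {ereal ((1/2) * (LINT s:{0..t}|lborel. (u s)\<^sup>2)) | u.
                            \<exists>\<phi>. admissible N \<beta> \<mu> \<gamma> a b t u \<phi>})"

end

theory Submission
  imports Defs
begin

text \<open>Near the boundary the controlled SIS path behaves like a logarithm: close to 0 the drift
  pushes I away from 0 at a rate proportional to I, and the control contributes at most
  I N |u|, so by AM-GM every halving of I costs a fixed amount of \<open>\<integral>u\<^sup>2\<close>.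
  The same holds for N - I close to N. Reaching level \<rho> from the equilibrium requires
  about log(1/\<rho>) halvings, hence the cost tends to infinity. To avoid differentiating
  logarithms of merely absolutely continuous paths, the halvings are counted directly:
  between the last visit of level a and the first visit of a/2 the path stays in [a/2, a],
  where the drift bound is linear in the level.\<close>

lemma continuous_on_crossing_interval:
  fixes Y :: "real \<Rightarrow> real"
  assumes cont: "continuous_on {p..t} Y" and "p \<le> t" "b < a" "a \<le> Y p" "Y t \<le> b"
  obtains q r where "p \<le> q" "q \<le> r" "r \<le> t" "Y q = a" "Y r = b"
    "\<And>\<theta>. \<theta> \<in> {q..r} \<Longrightarrow> b \<le> Y \<theta> \<and> Y \<theta> \<le> a"
proof -
  define S where "S = {\<theta>\<in>{p..t}. a \<le> Y \<theta>}"
  define q where "q = Sup S"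
  have "closed S"
    unfolding S_def by (rule continuous_on_closed_Collect_le) (auto intro: cont continuous_on_const)
  moreover have "p \<in> S" "bdd_above S" using assms unfolding S_def by (auto intro: bdd_aboveI[of _ t])
  ultimately have "q \<in> S" and q_max: "\<And>\<theta>. \<theta> \<in> S \<Longrightarrow> \<theta> \<le> q"
    unfolding q_def by (auto intro: closed_contains_Sup cSup_upper)
  then have q: "p \<le> q" "q \<le> t" "a \<le> Y q" unfolding S_def by auto
  have Y_after_q: "Y \<theta> < a" if "q < \<theta>" "\<theta> \<le> t" for \<theta>
    using q_max[of \<theta>] that q unfolding S_def by force
  have cont_qt: "continuous_on {q..t} Y" using q by (intro continuous_on_subset[OF cont]) auto
  obtain x where "q \<le> x" "x \<le> t" "Y x = a"
    using IVT2'[of Y t a q, OF _ q(3) q(2) cont_qt] assms by force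
  then have Yq: "Y q = a" using Y_after_q by force
  define R where "R = {\<theta>\<in>{q..t}. Y \<theta> \<le> b}"
  define r where "r = Inf R"
  have "closed R"
    unfolding R_def by (rule continuous_on_closed_Collect_le) (auto intro: cont_qt continuous_on_const)
  moreover have "t \<in> R" "bdd_below R" using assms q unfolding R_def by (auto intro: bdd_belowI[of _ q])
  ultimately have "r \<in> R" and r_min: "\<And>\<theta>. \<theta> \<in> R \<Longrightarrow> r \<le> \<theta>"
    unfolding r_def by (auto intro: closed_contains_Inf cInf_lower)
  then have r: "q \<le> r" "r \<le> t" "Y r \<le> b" unfolding R_def by auto
  have Y_before_r: "b < Y \<theta>" if "q \<le> \<theta>" "\<theta> < r" for \<theta>
    using r_min[of \<theta>] that r unfolding R_def by force
  have cont_qr: "continuous_on {q..r} Y" using q r by (intro continuous_on_subset[OF cont]) auto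
  obtain y where "q \<le> y" "y \<le> r" "Y y = b"
    using IVT2'[of Y r b q, OF r(3) _ r(1) cont_qr] Yq assms by force
  then have Yr: "Y r = b" using Y_before_r by force
  show thesis
  proof
    show "b \<le> Y \<theta> \<and> Y \<theta> \<le> a" if "\<theta> \<in> {q..r}" for \<theta>
      using that Y_after_q[of \<theta>] Y_before_r[of \<theta>] Yq Yr r
      by (cases "\<theta> = q"; cases "\<theta> = r") (auto simp: less_le)
  qed (use q r Yq Yr in auto)
qed

text \<open>The hypotheses below say \<open>(ln Y)' \<ge> -K w\<close> wherever \<open>0 < Y \<le> c\<close>, so Y cannot
  drop by a factor \<open>2\<^sup>n\<close> without \<open>\<integral>w\<close> growing linearly in n.\<close>

context
  fixes Y g w :: "real \<Rightarrow> real" and t c K :: real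
  assumes Y_cont: "continuous_on {0..t} Y"
    and g_int: "g integrable_on {0..t}" and w_int: "w integrable_on {0..t}"
    and w_nonneg: "\<And>\<theta>. \<theta> \<in> {0..t} \<Longrightarrow> 0 \<le> w \<theta>"
    and Y_drop: "\<And>q r. 0 \<le> q \<Longrightarrow> q \<le> r \<Longrightarrow> r \<le> t \<Longrightarrow> Y q - Y r = integral {q..r} g"
    and g_le: "\<And>\<theta>. \<theta> \<in> {0..t} \<Longrightarrow> 0 < Y \<theta> \<Longrightarrow> Y \<theta> \<le> c \<Longrightarrow> g \<theta> \<le> K * Y \<theta> * w \<theta>"
    and K_pos: "K > 0"
begin

lemma weight_integral_ge_halving:
  assumes "0 \<le> p" "p \<le> t" "0 < a" "a \<le> c" "a \<le> Y p" "Y t \<le> a / 2"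
  obtains r where "p \<le> r" "r \<le> t" "Y r = a / 2" "1 / (2 * K) \<le> integral {p..r} w"
proof -
  have cont: "continuous_on {p..t} Y" using assms by (intro continuous_on_subset[OF Y_cont]) auto
  have "a / 2 < a" using assms by simp
  then obtain q r where qr: "p \<le> q" "q \<le> r" "r \<le> t" "Y q = a" "Y r = a / 2"
    and band: "\<And>\<theta>. \<theta> \<in> {q..r} \<Longrightarrow> a / 2 \<le> Y \<theta> \<and> Y \<theta> \<le> a"
    by (rule continuous_on_crossing_interval[OF cont \<open>p \<le> t\<close> _ \<open>a \<le> Y p\<close> \<open>Y t \<le> a / 2\<close>]) blast
  have sub: "{q..r} \<subseteq> {p..r}" "{p..r} \<subseteq> {0..t}" using assms qr by auto
  have w_pr: "w integrable_on {p..r}" using integrable_on_subinterval[OF w_int sub(2)] .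
  have w_qr: "w integrable_on {q..r}" using integrable_on_subinterval[OF w_pr sub(1)] .
  have g_le_a: "g \<theta> \<le> K * a * w \<theta>" if "\<theta> \<in> {q..r}" for \<theta>
  proof -
    have \<theta>: "\<theta> \<in> {0..t}" using that sub by blast
    have "0 < Y \<theta>" "Y \<theta> \<le> c" "K * Y \<theta> \<le> K * a"
      using band[OF that] assms K_pos by auto
    then show ?thesis
      using g_le[OF \<theta>] w_nonneg[OF \<theta>] mult_right_mono[of "K * Y \<theta>" "K * a" "w \<theta>"] by linarith
  qed
  have "a / 2 = integral {q..r} g" using Y_drop[of q r] qr assms by simp
  also have "\<dots> \<le> integral {q..r} (\<lambda>\<theta>. K * a * w \<theta>)"
    using g_le_a integrable_on_subinterval[OF g_int] sub integrable_on_mult_right[OF w_qr]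
    by (intro integral_le) auto
  also have "\<dots> = K * a * integral {q..r} w" by simp
  also have "\<dots> \<le> K * a * integral {p..r} w"
  proof -
    have "integral {q..r} w \<le> integral {p..r} w"
      using sub w_nonneg by (intro integral_subset_le w_qr w_pr) auto
    then show ?thesis using K_pos assms by simp
  qed
  finally have "a * (1 / 2) \<le> a * (K * integral {p..r} w)" by (simp add: ac_simps)
  then have "1 / 2 \<le> K * integral {p..r} w" using \<open>0 < a\<close> by simp
  then have "1 / (2 * K) \<le> integral {p..r} w" using K_pos by (simp add: field_simps)
  with qr show thesis by (intro that[of r]) auto
qed

lemma weight_integral_ge_dyadic:
  assumes "0 \<le> p" "p \<le> t" "0 < a" "a \<le> c" "a \<le> Y p" "Y t \<le> a / 2 ^ n"
  shows "real n / (2 * K) \<le> integral {p..t} w"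
  using assms
proof (induction n arbitrary: p a)
  case 0
  have "0 \<le> integral {p..t} w"
    using 0 w_nonneg by (intro integral_nonneg integrable_on_subinterval[OF w_int]) auto
  then show ?case by simp
next
  case (Suc n)
  have "a / 2 ^ Suc n \<le> a / 2" using Suc.prems by (simp add: divide_le_eq)
  then obtain r where r: "p \<le> r" "r \<le> t" "Y r = a / 2" "1 / (2 * K) \<le> integral {p..r} w"
    using weight_integral_ge_halving[of p a] Suc.prems by auto
  have "real n / (2 * K) \<le> integral {r..t} w"
    using Suc.IH[of r "a / 2"] Suc.prems r by (simp add: mult.commute)
  moreover have "integral {p..t} w = integral {p..r} w + integral {r..t} w"
    using r Suc.prems
    by (intro Henstock_Kurzweil_Integration.integral_combine[symmetric]
        integrable_on_subinterval[OF w_int]) auto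
  ultimately show ?case using r(4) by (simp add: add_divide_distrib)
qed

end

lemma set_integrable_continuous_mult_square_integrable:
  fixes h u :: "real \<Rightarrow> real"
  assumes h: "continuous_on {a..b} h" and u: "u \<in> borel_measurable lborel"
    and u2: "set_integrable lborel {a..b} (\<lambda>s. (u s)\<^sup>2)"
  shows "set_integrable lborel {a..b} (\<lambda>s. h s * u s)"
proof -
  obtain B where B: "\<And>s. s \<in> {a..b} \<Longrightarrow> \<bar>h s\<bar> \<le> B"
    using compact_imp_bounded[OF compact_continuous_image[OF h]] by (force simp: bounded_real)
  have "set_integrable lborel {a..b} (\<lambda>_. 1::real)"
    unfolding set_integrable_def by (rule borel_integrable_compact) (auto intro: continuous_on_const)
  then have dom: "set_integrable lborel {a..b} (\<lambda>s. B * (1 + (u s)\<^sup>2))"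
    using u2 by (intro set_integrable_mult_right set_integral_add)
  show ?thesis
  proof (rule set_integrable_bound[OF dom])
    have "(\<lambda>s. indicator {a..b} s *\<^sub>R h s) \<in> borel_measurable borel"
      by (rule borel_measurable_continuous_on_indicator) (use h in auto)
    then show "set_borel_measurable lborel {a..b} (\<lambda>s. h s * u s)"
      unfolding set_borel_measurable_def using u by (simp add: mult.assoc[symmetric]) measurable
    show "AE s in lborel. s \<in> {a..b} \<longrightarrow> norm (h s * u s) \<le> norm (B * (1 + (u s)\<^sup>2))"
    proof (intro AE_I2 impI)
      fix s assume s: "s \<in> {a..b}"
      have "0 \<le> (\<bar>u s\<bar> - 1)\<^sup>2" by simp
      then have "\<bar>u s\<bar> \<le> 1 + (u s)\<^sup>2" by (simp add: power2_eq_square algebra_simps)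
      then have "\<bar>h s\<bar> * \<bar>u s\<bar> \<le> B * (1 + (u s)\<^sup>2)" using B[OF s] by (intro mult_mono) auto
      moreover have "0 \<le> B" using B[OF s] by linarith
      ultimately show "norm (h s * u s) \<le> norm (B * (1 + (u s)\<^sup>2))" by (simp add: abs_mult)
    qed
  qed
qed

definition controlled_sis_rate :: "real \<Rightarrow> real \<Rightarrow> real \<Rightarrow> real \<Rightarrow> real \<Rightarrow> real \<Rightarrow> real" where
  "controlled_sis_rate N \<beta> \<mu> \<gamma> x v = x * (\<beta> * N - \<mu> - \<gamma> - \<beta> * x) + x * (N - x) * v"

lemma admissible_integral_form:
  assumes adm: "admissible N \<beta> \<mu> \<gamma> a b t u \<phi>" and t: "0 \<le> t"
  defines "f \<equiv> \<lambda>\<theta>. controlled_sis_rate N \<beta> \<mu> \<gamma> (\<phi> \<theta>) (u \<theta>)"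
  shows "continuous_on {0..t} \<phi>" "\<phi> 0 = a" "\<phi> t = b"
    and "(\<lambda>s. (u s)\<^sup>2) integrable_on {0..t}"
    and "(LINT s:{0..t}|lborel. (u s)\<^sup>2) = integral {0..t} (\<lambda>s. (u s)\<^sup>2)"
    and "f integrable_on {0..t}"
    and "\<And>q r. 0 \<le> q \<Longrightarrow> q \<le> r \<Longrightarrow> r \<le> t \<Longrightarrow> \<phi> r - \<phi> q = integral {q..r} f"
proof -
  have u: "u \<in> borel_measurable lborel" and u2: "set_integrable lborel {0..t} (\<lambda>s. (u s)\<^sup>2)"
    and cont: "continuous_on {0..t} \<phi>" and bt: "\<phi> t = b"
    and eq: "\<And>s. s \<in> {0..t} \<Longrightarrow> \<phi> s = a
        + (LINT \<theta>:{0..s}|lborel. \<phi> \<theta> * (\<beta> * N - \<mu> - \<gamma> - \<beta> * \<phi> \<theta>))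
        + (LINT \<theta>:{0..s}|lborel. \<phi> \<theta> * (N - \<phi> \<theta>) * u \<theta>)"
    using adm unfolding admissible_def by auto
  show "continuous_on {0..t} \<phi>" "\<phi> t = b" by fact+
  show "(\<lambda>s. (u s)\<^sup>2) integrable_on {0..t}"
    "(LINT s:{0..t}|lborel. (u s)\<^sup>2) = integral {0..t} (\<lambda>s. (u s)\<^sup>2)"
    using set_borel_integral_eq_integral[OF u2] by auto
  have f_set_int: "set_integrable lborel {0..s} f" and
    \<phi>_eq: "\<phi> s = a + integral {0..s} f" if s: "s \<in> {0..t}" for s
  proof -
    have cont_s: "continuous_on {0..s} \<phi>" using s by (intro continuous_on_subset[OF cont]) auto
    have int1: "set_integrable lborel {0..s} (\<lambda>\<theta>. \<phi> \<theta> * (\<beta> * N - \<mu> - \<gamma> - \<beta> * \<phi> \<theta>))"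
      unfolding set_integrable_def by (intro borel_integrable_compact continuous_intros cont_s) auto
    have "set_integrable lborel {0..s} (\<lambda>\<theta>. (\<phi> \<theta> * (N - \<phi> \<theta>)) * u \<theta>)"
      using s set_integrable_subset[OF u2]
      by (intro set_integrable_continuous_mult_square_integrable u continuous_intros cont_s) auto
    then have int2: "set_integrable lborel {0..s} (\<lambda>\<theta>. \<phi> \<theta> * (N - \<phi> \<theta>) * u \<theta>)" by simp
    show "set_integrable lborel {0..s} f"
      unfolding f_def controlled_sis_rate_def using int1 int2 by (rule set_integral_add)
    show "\<phi> s = a + integral {0..s} f"
      using eq[OF s] set_integral_add(2)[OF int1 int2]
        set_borel_integral_eq_integral(2)[OF \<open>set_integrable lborel {0..s} f\<close>]
      unfolding f_def controlled_sis_rate_def by simp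
  qed
  show "f integrable_on {0..t}"
    using set_borel_integral_eq_integral(1)[OF f_set_int] t by simp
  show "\<phi> 0 = a" using \<phi>_eq[of 0] t by simp
  show "\<phi> r - \<phi> q = integral {q..r} f" if "0 \<le> q" "q \<le> r" "r \<le> t" for q r
  proof -
    have "integral {0..q} f + integral {q..r} f = integral {0..r} f"
      using that set_borel_integral_eq_integral(1)[OF f_set_int, of r]
      by (intro Henstock_Kurzweil_Integration.integral_combine) auto
    then show ?thesis using \<phi>_eq[of q] \<phi>_eq[of r] that by simp
  qed
qed

lemma abs_mult_le_square_div_plus:
  fixes M v e :: real
  assumes "e > 0"
  shows "M * \<bar>v\<bar> \<le> M\<^sup>2 * v\<^sup>2 / (4 * e) + e"
proof -
  have "0 \<le> (M * \<bar>v\<bar> - 2 * e)\<^sup>2" by simp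
  also have "\<dots> = M\<^sup>2 * v\<^sup>2 - 4 * e * (M * \<bar>v\<bar> - e)"
    by (simp add: power2_eq_square algebra_simps)
  finally show ?thesis using assms by (simp add: field_simps)
qed

lemma controlled_sis_rate_ge_near_zero:
  fixes N \<beta> \<mu> \<gamma> x v \<delta> :: real
  assumes "0 < N" "0 < \<beta>" "0 < x" "x \<le> \<delta>" "2 * \<beta> * \<delta> \<le> \<beta> * N - \<mu> - \<gamma>" "x \<le> N"
  defines "c \<equiv> \<beta> * N - \<mu> - \<gamma>"
  shows "- controlled_sis_rate N \<beta> \<mu> \<gamma> x v \<le> N\<^sup>2 / (2 * c) * x * v\<^sup>2"
proof -
  have "\<beta> * x \<le> \<beta> * \<delta>" using assms by (simp add: mult_left_mono)
  moreover have "0 < \<beta> * x" using assms by simp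
  ultimately have c: "0 < c" "2 * \<beta> * x \<le> c" using assms unfolding c_def by linarith+
  have "x * (c / 2) \<le> x * (c - \<beta> * x)" using assms c by (intro mult_left_mono) linarith+
  moreover have "- (x * (N - x) * v) \<le> x * (N * \<bar>v\<bar>)"
  proof -
    have "\<bar>x * (N - x) * v\<bar> \<le> x * (N * \<bar>v\<bar>)"
      using assms by (simp add: abs_mult) (intro mult_left_mono mult_right_mono, auto)
    then show ?thesis by linarith
  qed
  ultimately have "- controlled_sis_rate N \<beta> \<mu> \<gamma> x v \<le> x * (N * \<bar>v\<bar> - c / 2)"
    unfolding controlled_sis_rate_def c_def by (simp add: algebra_simps)
  also have "\<dots> \<le> x * (N\<^sup>2 * v\<^sup>2 / (4 * (c / 2)))"
    using abs_mult_le_square_div_plus[of "c / 2" N v] assms c by (intro mult_left_mono) auto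
  also have "\<dots> = N\<^sup>2 / (2 * c) * x * v\<^sup>2" by (simp add: field_simps)
  finally show ?thesis .
qed

lemma controlled_sis_rate_le_near_N:
  fixes N \<beta> \<mu> \<gamma> x v \<delta> :: real
  assumes "0 < N" "0 < \<beta>" "0 < \<mu> + \<gamma>" "0 < N - x" "N - x \<le> \<delta>"
    "2 * \<beta> * \<delta> \<le> \<mu> + \<gamma>" "2 * \<delta> \<le> N"
  shows "controlled_sis_rate N \<beta> \<mu> \<gamma> x v \<le> N * \<delta> / (\<mu> + \<gamma>) * (N - x) * v\<^sup>2"
proof -
  define z e where "z = N - x" and "e = (\<mu> + \<gamma>) / 2"
  have z: "0 < z" "z \<le> \<delta>" "x = N - z" and e: "0 < e" using assms unfolding z_def e_def by auto
  have "\<beta> * z \<le> \<beta> * \<delta>" using assms z by (simp add: mult_left_mono)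
  moreover have "2 * (\<beta> * \<delta>) \<le> \<mu> + \<gamma>" using assms by (simp add: mult.assoc)
  ultimately have "\<beta> * z \<le> e" unfolding e_def by (simp add: field_simps)
  moreover have "\<beta> * N - \<mu> - \<gamma> - \<beta> * x = \<beta> * z - 2 * e"
    unfolding z(3) e_def by (simp add: algebra_simps)
  ultimately have "\<beta> * N - \<mu> - \<gamma> - \<beta> * x \<le> - e" by linarith
  then have "x * (\<beta> * N - \<mu> - \<gamma> - \<beta> * x) \<le> (N / 2) * (- e)"
    using assms z e by (intro order_trans[OF mult_left_mono mult_right_mono_neg]) auto
  moreover have "x * z * v \<le> (N * z) * \<bar>v\<bar>"
  proof -
    have "\<bar>x * z * v\<bar> \<le> N * z * \<bar>v\<bar>"
      using assms z by (simp add: abs_mult) (intro mult_right_mono, auto)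
    then show ?thesis by linarith
  qed
  ultimately have "controlled_sis_rate N \<beta> \<mu> \<gamma> x v \<le> (N * z) * \<bar>v\<bar> - N * e / 2"
    unfolding controlled_sis_rate_def z_def by simp
  also have "\<dots> \<le> (N * z)\<^sup>2 * v\<^sup>2 / (4 * (N * e / 2))"
    using abs_mult_le_square_div_plus[of "N * e / 2" "N * z" v] e assms by auto
  also have "\<dots> = N * z / (2 * e) * z * v\<^sup>2" using assms e by (simp add: field_simps power2_eq_square)
  also have "\<dots> \<le> N * \<delta> / (2 * e) * z * v\<^sup>2"
    using z assms e by (intro mult_right_mono divide_right_mono) auto
  also have "2 * e = \<mu> + \<gamma>" unfolding e_def by simp
  finally show ?thesis unfolding z_def .
qed

lemma control_cost_ge_near_zero:
  fixes N \<beta> \<mu> \<gamma> :: real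
  assumes "0 < N" "0 < \<beta>" "0 < \<mu> + \<gamma>"
    and adm: "admissible N \<beta> \<mu> \<gamma> a \<rho> t u \<phi>" and "0 < t"
    and "0 < \<delta>" "2 * \<beta> * \<delta> \<le> \<beta> * N - \<mu> - \<gamma>" "\<delta> \<le> a" "\<rho> \<le> \<delta> / 2 ^ n"
  shows "(\<beta> * N - \<mu> - \<gamma>) / (2 * N\<^sup>2) * real n \<le> (1/2) * (LINT s:{0..t}|lborel. (u s)\<^sup>2)"
proof -
  define f where "f = (\<lambda>\<theta>. controlled_sis_rate N \<beta> \<mu> \<gamma> (\<phi> \<theta>) (u \<theta>))"
  define K where "K = N\<^sup>2 / (2 * (\<beta> * N - \<mu> - \<gamma>))"
  note adm_form = admissible_integral_form[OF adm less_imp_le[OF \<open>0 < t\<close>], folded f_def]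
  have "2 * (\<beta> * \<delta>) \<le> \<beta> * N - \<mu> - \<gamma>" "0 < \<beta> * \<delta>" using assms by (auto simp: mult.assoc)
  then have c: "0 < \<beta> * N - \<mu> - \<gamma>" and "\<beta> * \<delta> < \<beta> * N" using assms by linarith+
  then have "\<delta> < N" using \<open>0 < \<beta>\<close> by simp
  have "0 < K" unfolding K_def using assms c by (intro divide_pos_pos) auto
  have "real n / (2 * K) \<le> integral {0..t} (\<lambda>s. (u s)\<^sup>2)"
  proof (rule weight_integral_ge_dyadic[where Y = \<phi> and g = "\<lambda>\<theta>. - f \<theta>" and c = \<delta>])
    show "\<phi> q - \<phi> r = integral {q..r} (\<lambda>\<theta>. - f \<theta>)" if "0 \<le> q" "q \<le> r" "r \<le> t" for q r
      using adm_form(7)[OF that] by simp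
    show "- f \<theta> \<le> K * \<phi> \<theta> * (u \<theta>)\<^sup>2" if "0 < \<phi> \<theta>" "\<phi> \<theta> \<le> \<delta>" for \<theta>
      unfolding f_def K_def using that assms c \<open>\<delta> < N\<close> by (intro controlled_sis_rate_ge_near_zero) auto
  qed (use adm_form assms \<open>0 < K\<close> in \<open>auto intro: integrable_neg\<close>)
  then show ?thesis using adm_form(5) c unfolding K_def by (simp add: field_simps)
qed

lemma control_cost_ge_near_N:
  fixes N \<beta> \<mu> \<gamma> :: real
  assumes "0 < N" "0 < \<beta>" "0 < \<mu> + \<gamma>"
    and adm: "admissible N \<beta> \<mu> \<gamma> a (N - \<rho>) t u \<phi>" and "0 < t"
    and "0 < \<delta>" "2 * \<beta> * \<delta> \<le> \<mu> + \<gamma>" "2 * \<delta> \<le> N" "\<delta> \<le> N - a" "\<rho> \<le> \<delta> / 2 ^ n"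
  shows "(\<mu> + \<gamma>) / (4 * N * \<delta>) * real n \<le> (1/2) * (LINT s:{0..t}|lborel. (u s)\<^sup>2)"
proof -
  define f where "f = (\<lambda>\<theta>. controlled_sis_rate N \<beta> \<mu> \<gamma> (\<phi> \<theta>) (u \<theta>))"
  define K where "K = N * \<delta> / (\<mu> + \<gamma>)"
  note adm_form = admissible_integral_form[OF adm less_imp_le[OF \<open>0 < t\<close>], folded f_def]
  have "0 < K" unfolding K_def using assms by simp
  have "real n / (2 * K) \<le> integral {0..t} (\<lambda>s. (u s)\<^sup>2)"
  proof (rule weight_integral_ge_dyadic[where Y = "\<lambda>\<theta>. N - \<phi> \<theta>" and g = f and c = \<delta>])
    show "(N - \<phi> q) - (N - \<phi> r) = integral {q..r} f" if "0 \<le> q" "q \<le> r" "r \<le> t" for q r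
      using adm_form(7)[OF that] by simp
    show "f \<theta> \<le> K * (N - \<phi> \<theta>) * (u \<theta>)\<^sup>2" if "0 < N - \<phi> \<theta>" "N - \<phi> \<theta> \<le> \<delta>" for \<theta>
      unfolding f_def K_def using that assms by (intro controlled_sis_rate_le_near_N) auto
  qed (use adm_form assms \<open>0 < K\<close> in \<open>auto intro: continuous_on_diff continuous_on_const\<close>)
  then show ?thesis using adm_form(5) assms unfolding K_def by (simp add: field_simps)
qed

lemma quasi_potential_ge:
  assumes "\<And>t u \<phi>. 0 < t \<Longrightarrow> admissible N \<beta> \<mu> \<gamma> a b t u \<phi> \<Longrightarrow>
             B \<le> (1/2) * (LINT s:{0..t}|lborel. (u s)\<^sup>2)"
  shows "ereal B \<le> quasi_potential N \<beta> \<mu> \<gamma> a b"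
  unfolding quasi_potential_def by (intro INF_greatest Inf_greatest) (use assms in auto)

lemma tendsto_PInfty_at_right_0_dyadic:
  fixes Q :: "real \<Rightarrow> ereal"
  assumes "0 < a" "0 < C" and bound: "\<And>n \<rho>. 0 < \<rho> \<Longrightarrow> \<rho> \<le> a / 2 ^ n \<Longrightarrow> ereal (C * real n) \<le> Q \<rho>"
  shows "(Q \<longlongrightarrow> \<infinity>) (at_right 0)"
  unfolding tendsto_PInfty
proof
  fix r :: real
  obtain n where "r / C < real n" using reals_Archimedean2 by blast
  then have r_less: "ereal r < ereal (C * real n)" using assms by (simp add: field_simps)
  have "eventually (\<lambda>\<rho>. \<rho> \<in> {0<..<a / 2 ^ n}) (at_right 0)"
    using assms by (intro eventually_at_right_real) simp
  then show "eventually (\<lambda>\<rho>. ereal r < Q \<rho>) (at_right 0)"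
  proof (rule eventually_mono)
    fix \<rho> assume "\<rho> \<in> {0<..<a / 2 ^ n}"
    then have "ereal (C * real n) \<le> Q \<rho>" by (intro bound) auto
    with r_less show "ereal r < Q \<rho>" by (rule less_le_trans)
  qed
qed

lemma quasi_potential_tendsto_PInfty_near_zero:
  fixes N \<beta> \<mu> \<gamma> :: real
  assumes "0 < N" "0 < \<beta>" "0 < \<mu> + \<gamma>" "0 < \<delta>" "2 * \<beta> * \<delta> \<le> \<beta> * N - \<mu> - \<gamma>" "\<delta> \<le> a"
  shows "((\<lambda>\<rho>. quasi_potential N \<beta> \<mu> \<gamma> a \<rho>) \<longlongrightarrow> \<infinity>) (at_right 0)"
proof (rule tendsto_PInfty_at_right_0_dyadic)
  show "ereal ((\<beta> * N - \<mu> - \<gamma>) / (2 * N\<^sup>2) * real n) \<le> quasi_potential N \<beta> \<mu> \<gamma> a \<rho>"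
    if "\<rho> \<le> \<delta> / 2 ^ n" for n \<rho>
    using that assms by (intro quasi_potential_ge control_cost_ge_near_zero) auto
  have "0 < \<beta> * \<delta>" "2 * (\<beta> * \<delta>) \<le> \<beta> * N - \<mu> - \<gamma>" using assms by (simp_all add: mult.assoc)
  then show "0 < (\<beta> * N - \<mu> - \<gamma>) / (2 * N\<^sup>2)" using assms(1) by simp
qed (use assms in auto)

lemma quasi_potential_tendsto_PInfty_near_N:
  fixes N \<beta> \<mu> \<gamma> :: real
  assumes "0 < N" "0 < \<beta>" "0 < \<mu> + \<gamma>" "0 < \<delta>" "2 * \<beta> * \<delta> \<le> \<mu> + \<gamma>" "2 * \<delta> \<le> N"
    "\<delta> \<le> N - a"
  shows "((\<lambda>\<rho>. quasi_potential N \<beta> \<mu> \<gamma> a (N - \<rho>)) \<longlongrightarrow> \<infinity>) (at_right 0)"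
proof (rule tendsto_PInfty_at_right_0_dyadic)
  show "ereal ((\<mu> + \<gamma>) / (4 * N * \<delta>) * real n) \<le> quasi_potential N \<beta> \<mu> \<gamma> a (N - \<rho>)"
    if "\<rho> \<le> \<delta> / 2 ^ n" for n \<rho>
    using that assms by (intro quasi_potential_ge control_cost_ge_near_N) auto
qed (use assms in auto)

theorem proposition1:
  fixes N \<beta> \<mu> \<gamma> :: real
  assumes "N > 0" "\<beta> > 0" "\<mu> > 0" "\<gamma> > 0"
    and "\<beta> * N / (\<mu> + \<gamma>) > 1"
  defines "star \<equiv> N - (\<mu> + \<gamma>) / \<beta>"
  shows "((\<lambda>\<rho>. quasi_potential N \<beta> \<mu> \<gamma> star \<rho>) \<longlongrightarrow> \<infinity>) (at_right 0) \<and>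
         ((\<lambda>\<rho>. quasi_potential N \<beta> \<mu> \<gamma> star (N - \<rho>)) \<longlongrightarrow> \<infinity>) (at_right 0)"
proof
  have pos: "0 < \<mu> + \<gamma>" using assms by simp
  have "\<beta> * star = \<beta> * N - \<mu> - \<gamma>" "0 < \<beta> * N - \<mu> - \<gamma>"
    using assms unfolding star_def by (auto simp: field_simps)
  then have "0 < star" "2 * \<beta> * (star / 2) \<le> \<beta> * N - \<mu> - \<gamma>"
    using \<open>0 < \<beta>\<close> zero_less_mult_pos by (metis, simp)
  then show "((\<lambda>\<rho>. quasi_potential N \<beta> \<mu> \<gamma> star \<rho>) \<longlongrightarrow> \<infinity>) (at_right 0)"
    using assms(1,2) pos by (intro quasi_potential_tendsto_PInfty_near_zero[where \<delta> = "star / 2"]) auto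
  define \<delta> where "\<delta> = min ((\<mu> + \<gamma>) / (2 * \<beta>)) (N / 2)"
  have "0 < \<delta>" "2 * \<beta> * \<delta> \<le> \<mu> + \<gamma>" "2 * \<delta> \<le> N" "\<delta> \<le> N - star"
    using assms unfolding \<delta>_def star_def by (auto simp: min_def field_simps)
  then show "((\<lambda>\<rho>. quasi_potential N \<beta> \<mu> \<gamma> star (N - \<rho>)) \<longlongrightarrow> \<infinity>) (at_right 0)"
    using assms(1,2) pos by (intro quasi_potential_tendsto_PInfty_near_N)
qed

end
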